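(* Let $A,B\subseteq\mathbb R$ be nonempty bounded open intervals. Then $\mathfrak{ss}_l^A=\mathfrak{ss}_l^B$.
   Context: Let $\mathfrak S_{cc}$ be the set of all sequences $\mathbf a=\langle a_i:i\in\omega\rangle$ of rational numbers with $a_i\to0$ such that $\sum_i a_i$ is conditionally convergent (converges to a real number, with the positive terms summing to $+\infty$ and the negative terms to $-\infty$). Let $[\omega]^\omega_\omega$ be the set of infinite coinfinite subsets of $\omega$; for such $X$ with increasing enumeration $\langle i_n\rangle$, $\sum_X\mathbf a$ denotes $\sum_n a_{i_n}$. For $A\subseteq\mathbb R$, $\mathfrak{ss}_l^A$ is the least cardinality of $\mathcal X\subseteq[\omega]^\omega_\omega$ such that every $\mathbf a\in\mathfrak S_{cc}$ has some $X\in\mathcal X$ for which $\sum_X\mathbf a$ converges to a limit in $A$. *)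

theory Defs
  imports "HOL-Analysis.Analysis" "HOL-Library.Infinite_Set"
begin

definition Scc :: "(nat \<Rightarrow> rat) set" where
  "Scc = {a. (\<lambda>i. real_of_rat (a i)) \<longlonglongrightarrow> 0
             \<and> summable (\<lambda>i. real_of_rat (a i))
             \<and> filterlim (\<lambda>n. \<Sum>i<n. max 0 (real_of_rat (a i))) at_top sequentially
             \<and> filterlim (\<lambda>n. \<Sum>i<n. min 0 (real_of_rat (a i))) at_bot sequentially}"

definition infcoinf :: "nat set set" where
  "infcoinf = {X. infinite X \<and> infinite (UNIV - X)}"

definition subseries_conv_in :: "real set \<Rightarrow> nat set \<Rightarrow> (nat \<Rightarrow> rat) \<Rightarrow> bool" where
  "subseries_conv_in A X a \<longleftrightarrow> (\<exists>L\<in>A. (\<lambda>n. real_of_rat (a (enumerate X n))) sums L)"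

definition ss_witness :: "real set \<Rightarrow> nat set set \<Rightarrow> bool" where
  "ss_witness A FF \<longleftrightarrow> FF \<subseteq> infcoinf \<and> (\<forall>a\<in>Scc. \<exists>X\<in>FF. subseries_conv_in A X a)"

text \<open>ss_l^A as a cardinal (a well-order on a witness family of least cardinality);
  cardinal equality is ordIso (=o).\<close>
definition ssl :: "real set \<Rightarrow> nat set rel" where
  "ssl A = card_of (SOME FF. ss_witness A FF \<and> (\<forall>GG. ss_witness A GG \<longrightarrow> (card_of FF, card_of GG) \<in> ordLeq))"

end

theory Submission
  imports Defs "HOL-Library.Countable_Set_Type"
begin

(*
  A witness family F for a bounded set A yields one for any set B with nonempty interior: the
  family of all finite modifications X \<union> E of members X of F.  Given a sequence a, pick a
  finite set E of indices on which a sums to nearly a point t of the interior of B (possible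
  because a tends to 0 while its positive and negative parts diverge), delete E from a and scale
  by a large integer n.  Some X in F makes the subseries of the scaled sequence converge into A,
  so the subseries of the unscaled one converges to a number of size at most sup |A| / n, and
  adding E back gives a subseries along X \<union> E converging near t.  This family is no larger than
  F, because F is infinite: against finitely many X one can plant a large value at the least
  element of each X and push all their subseries sums above A.
*)

unbundle cardinal_syntax

definition conditionally_convergent :: "(nat \<Rightarrow> real) \<Rightarrow> bool" where
  "conditionally_convergent y \<longleftrightarrow> summable y
     \<and> filterlim (\<lambda>n. \<Sum>i<n. max 0 (y i)) at_top sequentially
     \<and> filterlim (\<lambda>n. \<Sum>i<n. min 0 (y i)) at_bot sequentially"

lemma Scc_iff_conditionally_convergent:
  "a \<in> Scc \<longleftrightarrow> conditionally_convergent (\<lambda>i. real_of_rat (a i))"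
  unfolding Scc_def conditionally_convergent_def using summable_LIMSEQ_zero by blast

lemma partial_sums_finite_modification:
  fixes g :: "'a \<Rightarrow> 'b::ab_group_add"
  assumes "finite {i. z i \<noteq> y i}"
  obtains C where "\<forall>\<^sub>F n in sequentially. (\<Sum>i<n. g (z i)) = C + (\<Sum>i<n. g (y i))"
proof -
  obtain N where N: "{i. z i \<noteq> y i} \<subseteq> {..<N}"
    using assms finite_nat_iff_bounded by blast
  then have zy: "z i = y i" if "N \<le> i" for i
    using that by fastforce
  have "(\<Sum>i<n. g (z i)) = (\<Sum>i<N. g (z i) - g (y i)) + (\<Sum>i<n. g (y i))" if "N \<le> n" for n
  proof -
    have "(\<Sum>i<n. g (z i) - g (y i)) = (\<Sum>i<N. g (z i) - g (y i))"
      by (rule sum.mono_neutral_right) (use zy that in auto)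
    then show ?thesis by (simp add: sum_subtractf algebra_simps)
  qed
  then show thesis
    by (intro that[of "\<Sum>i<N. g (z i) - g (y i)"]) (auto simp: eventually_sequentially)
qed

lemma conditionally_convergent_finite_modification:
  assumes y: "conditionally_convergent y" and fin: "finite {i. z i \<noteq> y i}"
  shows "conditionally_convergent z"
proof -
  have "\<forall>\<^sub>F i in sequentially. z i = y i"
    using fin by (simp add: eventually_cofinite[symmetric] cofinite_eq_sequentially)
  then have "summable z" using y summable_cong by (auto simp: conditionally_convergent_def)
  moreover obtain C where C: "\<forall>\<^sub>F n in sequentially.
      (\<Sum>i<n. max 0 (z i)) = C + (\<Sum>i<n. max 0 (y i))"
    using partial_sums_finite_modification[OF fin] by blast
  then have "filterlim (\<lambda>n. \<Sum>i<n. max 0 (z i)) at_top sequentially"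
    using y filterlim_tendsto_add_at_top[OF tendsto_const]
    by (subst filterlim_cong[OF refl refl C]) (auto simp: conditionally_convergent_def)
  moreover obtain D where D: "\<forall>\<^sub>F n in sequentially.
      (\<Sum>i<n. min 0 (z i)) = D + (\<Sum>i<n. min 0 (y i))"
    using partial_sums_finite_modification[OF fin] by blast
  then have "filterlim (\<lambda>n. \<Sum>i<n. min 0 (z i)) at_bot sequentially"
    using y by (subst filterlim_cong[OF refl refl D])
      (simp add: filterlim_tendsto_add_at_bot_iff[OF tendsto_const] conditionally_convergent_def)
  ultimately show ?thesis by (simp add: conditionally_convergent_def)
qed

lemma conditionally_convergent_scale:
  assumes y: "conditionally_convergent y" and c: "0 < c"
  shows "conditionally_convergent (\<lambda>i. c * y i)"
proof -
  have "max 0 (c * v) = c * max 0 v" "min 0 (c * v) = c * min 0 v" for v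
    using c by (auto simp: max_def min_def zero_le_mult_iff)
  then show ?thesis
    using y by (auto simp: conditionally_convergent_def sum_distrib_left[symmetric]
      intro!: summable_mult filterlim_tendsto_pos_mult_at_top[OF tendsto_const c]
        filterlim_tendsto_pos_mult_at_bot[OF tendsto_const c])
qed

lemma Scc_finite_modification:
  assumes "a \<in> Scc" and "finite {i. b i \<noteq> a i}"
  shows "b \<in> Scc"
  using assms conditionally_convergent_finite_modification
  by (simp add: Scc_iff_conditionally_convergent)

lemma Scc_scale:
  assumes "a \<in> Scc" and "0 < c"
  shows "(\<lambda>i. c * a i) \<in> Scc"
  using assms conditionally_convergent_scale[of _ "real_of_rat c"]
  by (simp add: Scc_iff_conditionally_convergent of_rat_mult)

lemma small_steps_hit_interval:
  fixes p :: "nat \<Rightarrow> real"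
  assumes "0 < \<delta>" and start: "p N \<le> t" and steps: "\<And>n. N \<le> n \<Longrightarrow> p (Suc n) < p n + \<delta>"
    and reach: "t \<le> p (N + k)"
  shows "\<exists>n\<ge>N. t \<le> p n \<and> p n < t + \<delta>"
  using reach
proof (induction k)
  case 0
  then show ?case using \<open>0 < \<delta>\<close> start by (intro exI[of _ N]) auto
next
  case (Suc k)
  show ?case
  proof (cases "t \<le> p (N + k)")
    case True
    then show ?thesis by (rule Suc.IH)
  next
    case False
    then show ?thesis using Suc.prems steps[of "N + k"] by (intro exI[of _ "Suc (N + k)"]) auto
  qed
qed

lemma finite_subsum_near_nonneg:
  fixes y :: "nat \<Rightarrow> real"
  assumes y0: "y \<longlonglongrightarrow> 0" and pos: "filterlim (\<lambda>n. \<Sum>i<n. max 0 (y i)) at_top sequentially"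
    and "0 \<le> t" and "0 < \<delta>"
  shows "\<exists>E. finite E \<and> \<bar>(\<Sum>i\<in>E. y i) - t\<bar> < \<delta>"
proof -
  obtain N where N: "\<And>i. N \<le> i \<Longrightarrow> \<bar>y i\<bar> < \<delta>"
    using y0 \<open>0 < \<delta>\<close> unfolding LIMSEQ_iff by (metis real_norm_def diff_zero)
  define p where "p n = (\<Sum>i<n. max 0 (y i)) - (\<Sum>i<N. max 0 (y i))" for n
  have "\<forall>\<^sub>F n in sequentially. t + (\<Sum>i<N. max 0 (y i)) \<le> (\<Sum>i<n. max 0 (y i))"
    using pos by (simp add: filterlim_at_top)
  then obtain k where "t \<le> p (N + k)"
    unfolding p_def eventually_sequentially by (metis add.commute le_add1 le_diff_eq)
  moreover have "p (Suc n) < p n + \<delta>" if "N \<le> n" for n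
    using N[OF that] \<open>0 < \<delta>\<close> by (simp add: p_def max_def abs_less_iff)
  ultimately obtain n where n: "N \<le> n" "t \<le> p n" "p n < t + \<delta>"
    using small_steps_hit_interval[of \<delta> p N t] \<open>0 \<le> t\<close> \<open>0 < \<delta>\<close> by (auto simp: p_def)
  define E where "E = {i \<in> {N..<n}. 0 < y i}"
  have "p n = (\<Sum>i\<in>{N..<n}. max 0 (y i))"
    unfolding p_def using sum_diff_nat_ivl[of 0 N n] n(1) by (simp add: atLeast0LessThan)
  also have "\<dots> = (\<Sum>i\<in>E. y i)"
    unfolding E_def by (subst sum.inter_filter) (auto intro!: sum.cong simp: max_def)
  finally show ?thesis using n by (intro exI[of _ E]) (auto simp: E_def)
qed

lemma conditionally_convergent_finite_subsum_near:
  assumes y: "conditionally_convergent y" and "0 < \<delta>"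
  shows "\<exists>E. finite E \<and> \<bar>(\<Sum>i\<in>E. y i) - t\<bar> < \<delta>"
proof (cases "0 \<le> t")
  case True
  then show ?thesis
    using finite_subsum_near_nonneg[of y t \<delta>] y \<open>0 < \<delta>\<close> summable_LIMSEQ_zero
    by (auto simp: conditionally_convergent_def)
next
  case False
  have "max 0 (- v) = - min 0 v" for v :: real by (simp add: max_def min_def)
  then have "filterlim (\<lambda>n. \<Sum>i<n. max 0 (- y i)) at_top sequentially"
    using y by (simp add: sum_negf filterlim_uminus_at_bot[symmetric] conditionally_convergent_def)
  moreover have "(\<lambda>i. - y i) \<longlonglongrightarrow> 0"
    using y summable_LIMSEQ_zero tendsto_minus by (fastforce simp: conditionally_convergent_def)
  ultimately obtain E where "finite E" "\<bar>(\<Sum>i\<in>E. - y i) - (- t)\<bar> < \<delta>"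
    using finite_subsum_near_nonneg[of "\<lambda>i. - y i" "- t" \<delta>] \<open>0 < \<delta>\<close> False by auto
  then show ?thesis by (intro exI[of _ E]) (auto simp: sum_negf abs_minus_commute)
qed

lemma sums_enumerate_iff:
  fixes f :: "nat \<Rightarrow> 'a::real_normed_vector"
  assumes "infinite X"
  shows "(\<lambda>n. f (enumerate X n)) sums L \<longleftrightarrow> (\<lambda>i. if i \<in> X then f i else 0) sums L"
proof -
  have "(\<lambda>n. (\<lambda>i. if i \<in> X then f i else 0) (enumerate X n)) sums L
      \<longleftrightarrow> (\<lambda>i. if i \<in> X then f i else 0) sums L"
    by (rule sums_mono_reindex) (use assms range_enumerate strict_mono_enumerate in auto)
  then show ?thesis using enumerate_in_set[OF assms] by simp
qed

lemma subseries_conv_in_iff: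
  assumes "infinite X"
  shows "subseries_conv_in A X a
    \<longleftrightarrow> (\<exists>L\<in>A. (\<lambda>i. if i \<in> X then real_of_rat (a i) else 0) sums L)"
  using sums_enumerate_iff[OF assms, of "\<lambda>i. real_of_rat (a i)"] by (simp add: subseries_conv_in_def)

lemma infcoinf_Un_finite:
  assumes "X \<in> infcoinf" and "finite E"
  shows "X \<union> E \<in> infcoinf"
proof -
  have "UNIV - (X \<union> E) = (UNIV - X) - E" by auto
  then show ?thesis using assms Diff_infinite_finite[of E "UNIV - X"] by (auto simp: infcoinf_def)
qed

lemma sums_Diff_planted:
  fixes y :: "nat \<Rightarrow> real"
  assumes "finite P" and "(\<lambda>i. if i \<in> X then (if i \<in> P then c else y i) else 0) sums L"
  shows "(\<lambda>i. if i \<in> X - P then y i else 0) sums (L - real (card (X \<inter> P)) * c)"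
proof -
  have "(\<lambda>i. if i \<in> X \<inter> P then c else 0) sums (\<Sum>i\<in>X \<inter> P. c)"
    by (rule sums_If_finite_set) (use assms in auto)
  moreover have "(\<lambda>i. if i \<in> X - P then y i else 0)
      = (\<lambda>i. (if i \<in> X then (if i \<in> P then c else y i) else 0) - (if i \<in> X \<inter> P then c else 0))"
    by auto
  ultimately show ?thesis using sums_diff[OF assms(2)] by simp
qed

lemma ss_witness_infinite:
  assumes F: "ss_witness A F" and "bdd_above A" and "Scc \<noteq> {}"
  shows "infinite F"
proof
  assume fin: "finite F"
  obtain M where M: "\<And>L. L \<in> A \<Longrightarrow> L \<le> M" using \<open>bdd_above A\<close> by (auto simp: bdd_above_def)
  obtain a where a: "a \<in> Scc" using \<open>Scc \<noteq> {}\<close> by auto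
  define P where "P = (\<lambda>X. LEAST i. i \<in> X) ` F"
  have finP: "finite P" unfolding P_def using fin by simp
  define rest where "rest X = suminf (\<lambda>i. if i \<in> X - P then real_of_rat (a i) else 0)" for X
  obtain q :: nat where q: "M + (\<Sum>X\<in>F. \<bar>rest X\<bar>) < real q"
    using reals_Archimedean2 by blast
  define b where "b i = (if i \<in> P then of_nat q else a i)" for i
  have "{i. b i \<noteq> a i} \<subseteq> P" unfolding b_def by auto
  then have "b \<in> Scc" using Scc_finite_modification[OF a] finP finite_subset by blast
  then obtain X where X: "X \<in> F" and "subseries_conv_in A X b"
    using F by (auto simp: ss_witness_def)
  moreover have "infinite X" using X F by (auto simp: ss_witness_def infcoinf_def)
  ultimately obtain L where L: "L \<in> A"
    and sums_L: "(\<lambda>i. if i \<in> X then real_of_rat (b i) else 0) sums L"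
    by (auto simp: subseries_conv_in_iff)
  obtain x where "x \<in> X" using \<open>infinite X\<close> infinite_imp_nonempty by blast
  then have "(LEAST i. i \<in> X) \<in> X \<inter> P" using X unfolding P_def by (auto intro: LeastI)
  then have q_le: "real q \<le> real (card (X \<inter> P)) * real q"
    using finP card_gt_0_iff[of "X \<inter> P"] by (auto simp: mult_le_cancel_right1)
  have "(\<lambda>i. if i \<in> X then real_of_rat (b i) else 0)
      = (\<lambda>i. if i \<in> X then (if i \<in> P then real q else real_of_rat (a i)) else 0)"
    by (auto simp: b_def)
  with sums_L have "rest X = L - real (card (X \<inter> P)) * real q"
    unfolding rest_def using sums_Diff_planted[OF finP] sums_unique by fastforce
  moreover have "\<bar>rest X\<bar> \<le> (\<Sum>X\<in>F. \<bar>rest X\<bar>)" by (rule member_le_sum) (use X fin in auto)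
  ultimately have "M < L" using q q_le by linarith
  then show False using M[OF L] by simp
qed

lemma ss_witness_small_subseries:
  assumes F: "ss_witness A F" and "bounded A" and "0 < \<epsilon>" and a: "a \<in> Scc"
  shows "\<exists>X\<in>F. \<exists>L. \<bar>L\<bar> < \<epsilon> \<and> (\<lambda>i. if i \<in> X then real_of_rat (a i) else 0) sums L"
proof -
  obtain R where R: "\<And>L. L \<in> A \<Longrightarrow> \<bar>L\<bar> \<le> R" and "0 \<le> R"
    using \<open>bounded A\<close> by (auto simp: bounded_iff) (meson abs_ge_zero abs_le_D1 order_trans)
  obtain n :: nat where n: "R / \<epsilon> < real n" using reals_Archimedean2 by blast
  then have "0 < n"
    using \<open>0 \<le> R\<close> \<open>0 < \<epsilon>\<close> by (metis divide_nonneg_pos of_nat_0 order_le_less_trans less_irrefl neq0_conv)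
  then have "(\<lambda>i. of_nat n * a i) \<in> Scc" by (intro Scc_scale[OF a]) simp
  then obtain X where X: "X \<in> F" and "subseries_conv_in A X (\<lambda>i. of_nat n * a i)"
    using F by (auto simp: ss_witness_def)
  moreover have "infinite X" using X F by (auto simp: ss_witness_def infcoinf_def)
  ultimately obtain L where L: "L \<in> A"
    and sums_L: "(\<lambda>i. if i \<in> X then real_of_rat (of_nat n * a i) else 0) sums L"
    by (auto simp: subseries_conv_in_iff)
  have "(\<lambda>i. if i \<in> X then real_of_rat (a i) else 0) sums (L / real n)"
    using sums_divide[OF sums_L, of "real n"] \<open>0 < n\<close>
    by (simp add: if_distrib[of "\<lambda>x. x / _"] of_rat_mult cong: if_cong)
  moreover have "\<bar>L / real n\<bar> < \<epsilon>"
    using R[OF L] n \<open>0 < n\<close> \<open>0 < \<epsilon>\<close> by (simp add: divide_less_eq field_simps)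
  ultimately show ?thesis using X by blast
qed

lemma subseries_conv_in_finite_variant:
  assumes F: "ss_witness A F" and "bounded A" and "0 < \<delta>" and "ball t \<delta> \<subseteq> B" and a: "a \<in> Scc"
  shows "\<exists>X\<in>F. \<exists>E. finite E \<and> subseries_conv_in B (X \<union> E) a"
proof -
  let ?y = "\<lambda>i. real_of_rat (a i)"
  obtain E where "finite E" and E: "\<bar>(\<Sum>i\<in>E. ?y i) - t\<bar> < \<delta> / 2"
    using a conditionally_convergent_finite_subsum_near[of ?y "\<delta> / 2" t] \<open>0 < \<delta>\<close>
    by (auto simp: Scc_iff_conditionally_convergent)
  define b where "b i = (if i \<in> E then 0 else a i)" for i
  have "{i. b i \<noteq> a i} \<subseteq> E" by (auto simp: b_def)
  then have "b \<in> Scc" using Scc_finite_modification[OF a] \<open>finite E\<close> finite_subset by blast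
  then obtain X L where X: "X \<in> F" and L: "\<bar>L\<bar> < \<delta> / 2"
    and sums_L: "(\<lambda>i. if i \<in> X then real_of_rat (b i) else 0) sums L"
    using ss_witness_small_subseries[OF F \<open>bounded A\<close>, of "\<delta> / 2" b] \<open>0 < \<delta>\<close> by auto
  have "(\<lambda>i. if i \<in> X \<union> E then ?y i else 0)
      = (\<lambda>i. (if i \<in> X then real_of_rat (b i) else 0) + (if i \<in> E then ?y i else 0))"
    by (auto simp: b_def)
  then have "(\<lambda>i. if i \<in> X \<union> E then ?y i else 0) sums (L + (\<Sum>i\<in>E. ?y i))"
    using sums_add[OF sums_L sums_If_finite_set[OF \<open>finite E\<close>]] by simp
  moreover have "L + (\<Sum>i\<in>E. ?y i) \<in> ball t \<delta>"
    using L E unfolding mem_ball dist_real_def by linarith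
  ultimately have "\<exists>L\<in>B. (\<lambda>i. if i \<in> X \<union> E then ?y i else 0) sums L"
    using \<open>ball t \<delta> \<subseteq> B\<close> by blast
  moreover have "infinite (X \<union> E)" using X F by (auto simp: ss_witness_def infcoinf_def)
  ultimately have "subseries_conv_in B (X \<union> E) a" by (simp add: subseries_conv_in_iff)
  then show ?thesis using \<open>finite E\<close> by (intro bexI[OF _ X] exI[of _ E]) simp
qed

definition finite_variants :: "nat set set \<Rightarrow> nat set set" where
  "finite_variants F = (\<lambda>(X, E). X \<union> E) ` (F \<times> {E. finite E})"

lemma ss_witness_finite_variants:
  assumes F: "ss_witness A F" and "bounded A" and "interior B \<noteq> {}"
  shows "ss_witness B (finite_variants F)"
proof -
  obtain t \<delta> where "0 < \<delta>" "ball t \<delta> \<subseteq> B" using \<open>interior B \<noteq> {}\<close> mem_interior by blast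
  then have "\<exists>Y\<in>finite_variants F. subseries_conv_in B Y a" if "a \<in> Scc" for a
    using subseries_conv_in_finite_variant[OF F \<open>bounded A\<close>] that
    by (fastforce simp: finite_variants_def)
  moreover have "finite_variants F \<subseteq> infcoinf"
  proof
    fix Y assume "Y \<in> finite_variants F"
    then obtain X E where "X \<in> F" "finite E" "Y = X \<union> E" by (auto simp: finite_variants_def)
    then show "Y \<in> infcoinf" using F infcoinf_Un_finite by (auto simp: ss_witness_def)
  qed
  ultimately show ?thesis by (simp add: ss_witness_def)
qed

lemma card_of_finite_variants_le:
  assumes "infinite F"
  shows "card_of (finite_variants F) \<le>o card_of F"
proof -
  have countable: "card_of {E :: nat set. finite E} \<le>o card_of F"
    using countable_Collect_finite countable_card_of_nat assms infinite_iff_card_of_nat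
      ordLeq_transitive by blast
  have "card_of (F \<times> {E :: nat set. finite E}) \<le>o card_of F"
    by (intro ordIso_imp_ordLeq conjunct1[OF card_of_Times_infinite[OF assms _ countable]]) auto
  then show ?thesis
    unfolding finite_variants_def using card_of_image ordLeq_transitive by blast
qed

lemma ss_witness_transfer:
  assumes F: "ss_witness A F" and "bounded A" and "interior B \<noteq> {}"
  shows "\<exists>G. ss_witness B G \<and> card_of G \<le>o card_of F"
proof (cases "Scc = {}")
  case True
  then have "ss_witness B {}" by (simp add: ss_witness_def)
  then show ?thesis using card_of_empty by blast
next
  case False
  then have "infinite F"
    using ss_witness_infinite[OF F] bounded_imp_bdd_above[OF \<open>bounded A\<close>] by blast
  then show ?thesis
    using ss_witness_finite_variants[OF assms] card_of_finite_variants_le by blast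
qed

lemma ssl_minimal:
  assumes "ss_witness A F"
  obtains G where "ss_witness A G" and "ssl A = card_of G"
    and "\<And>H. ss_witness A H \<Longrightarrow> card_of G \<le>o card_of H"
proof -
  have "\<exists>r \<in> card_of ` {F. ss_witness A F}. \<forall>r' \<in> card_of ` {F. ss_witness A F}. r \<le>o r'"
    by (rule exists_minim_Well_order) (use assms card_of_Well_order in auto)
  then have "\<exists>G. ss_witness A G \<and> (\<forall>H. ss_witness A H \<longrightarrow> card_of G \<le>o card_of H)" by auto
  from someI_ex[OF this] show thesis by (intro that) (auto simp: ssl_def)
qed

lemma ssl_ordIso_if_mutual_transfer:
  assumes AB: "\<And>F. ss_witness A F \<Longrightarrow> \<exists>G. ss_witness B G \<and> card_of G \<le>o card_of F"
    and BA: "\<And>G. ss_witness B G \<Longrightarrow> \<exists>F. ss_witness A F \<and> card_of F \<le>o card_of G"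
  shows "(ssl A, ssl B) \<in> ordIso"
proof (cases "\<exists>F. ss_witness A F")
  case True
  then obtain F where F: "ss_witness A F" "ssl A = card_of F"
    and F_min: "\<And>H. ss_witness A H \<Longrightarrow> card_of F \<le>o card_of H"
    using ssl_minimal by metis
  then have "\<exists>G. ss_witness B G" using AB by blast
  then obtain G where G: "ss_witness B G" "ssl B = card_of G"
    and G_min: "\<And>H. ss_witness B H \<Longrightarrow> card_of G \<le>o card_of H"
    using ssl_minimal by metis
  have "card_of G \<le>o card_of F" using AB[OF F(1)] G_min ordLeq_transitive by blast
  moreover have "card_of F \<le>o card_of G" using BA[OF G(1)] F_min ordLeq_transitive by blast
  ultimately show ?thesis using F(2) G(2) by (simp add: ordIso_iff_ordLeq)
next
  case False
  then have "\<not> (\<exists>G. ss_witness B G)" using BA by blast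
  \<comment> \<open>then both ssl A and ssl B are the cardinality of SOME FF. False\<close>
  with False have "ssl A = ssl B" by (simp add: ssl_def)
  then show ?thesis using card_of_refl by (simp add: ssl_def)
qed

theorem ssl_ordIso_of_bounded:
  assumes "bounded A" "interior A \<noteq> {}" "bounded B" "interior B \<noteq> {}"
  shows "(ssl A, ssl B) \<in> ordIso"
  using assms by (intro ssl_ordIso_if_mutual_transfer ss_witness_transfer)

theorem mainTheorem11:
  fixes a b c d :: real
  assumes "a < b" and "c < d"
  shows "(ssl {a<..<b}, ssl {c<..<d}) \<in> ordIso"
  using assms by (intro ssl_ordIso_of_bounded) (simp_all add: interior_greaterThanLessThan_real)

end
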